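(* Let $G$ be a locally compact, $\sigma$-compact (Hausdorff) group. If $K$ is a torsion-free discrete subgroup of $G$ that satisfies the strong Atiyah conjecture, then each nonzero function $f \in L^2(G)$ has linearly independent left $K$-translations; that is, whenever $k_1,\dots,k_n \in K$ are distinct and $c_1,\dots,c_n \in \mathbb{C}$ are not all zero, $\sum_{j=1}^n c_j L(k_j) f \neq 0$.
   Context: $L^2(G)$ is taken with respect to a left Haar measure, and $L(k)f(x) = f(k^{-1}x)$. A group is torsion-free if its only element of finite order is the identity. For a torsion-free discrete group $K$, the strong Atiyah conjecture for $K$ asserts: for every $m \times n$ matrix $A$ over the group ring $\mathbb{C}K$, the von Neumann dimension (over the group von Neumann algebra $\mathcal{N}(K)$) of the kernel of the bounded operator $\ell^2(K)^n \to \ell^2(K)^m$ given by left multiplication (convolution) by $A$ is an integer. *)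

theory Defs
  imports "HOL-Analysis.Analysis"
begin

(* The group G is a type 'g of class topological_group_add (a possibly
   non-commutative topological group, written additively: group law (+),
   inverse uminus, identity 0).  So k^{-1} x is written  -k + x. *)

definition sigma_compact_type :: "'a::topological_space itself \<Rightarrow> bool" where
  "sigma_compact_type _ \<longleftrightarrow>
     (\<exists>C :: nat \<Rightarrow> 'a set. (\<forall>n. compact (C n)) \<and> (\<Union>n. C n) = UNIV)"

definition left_haar_measure :: "'g::{topological_group_add,t2_space} measure \<Rightarrow> bool" where
  "left_haar_measure \<mu> \<longleftrightarrow>
     sets \<mu> = sets borel \<and>
     (\<forall>g A. A \<in> sets borel \<longrightarrow> emeasure \<mu> ((\<lambda>x. g + x) ` A) = emeasure \<mu> A) \<and>
     (\<forall>C. compact C \<longrightarrow> emeasure \<mu> C < \<infinity>) \<and>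
     (\<forall>U. open U \<and> U \<noteq> {} \<longrightarrow> emeasure \<mu> U > 0) \<and>
     (\<forall>A \<in> sets borel. emeasure \<mu> A = (INF U \<in> {U. open U \<and> A \<subseteq> U}. emeasure \<mu> U)) \<and>
     (\<forall>U. open U \<longrightarrow> emeasure \<mu> U = (SUP C \<in> {C. compact C \<and> C \<subseteq> U}. emeasure \<mu> C))"

definition is_subgroup :: "'g::group_add set \<Rightarrow> bool" where
  "is_subgroup K \<longleftrightarrow> 0 \<in> K \<and> (\<forall>a\<in>K. \<forall>b\<in>K. a + b \<in> K) \<and> (\<forall>a\<in>K. - a \<in> K)"

definition discrete_subset :: "'g::topological_space set \<Rightarrow> bool" where
  "discrete_subset K \<longleftrightarrow> (\<forall>k\<in>K. \<exists>U. open U \<and> U \<inter> K = {k})"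

definition torsion_free :: "'g::group_add set \<Rightarrow> bool" where
  "torsion_free K \<longleftrightarrow>
     (\<forall>k\<in>K. \<forall>n::nat. n > 0 \<and> ((\<lambda>x. x + k) ^^ n) 0 = 0 \<longrightarrow> k = 0)"

definition group_ring :: "'g set \<Rightarrow> ('g \<Rightarrow> complex) set" where
  "group_ring K = {a. finite {g. a g \<noteq> 0} \<and> {g. a g \<noteq> 0} \<subseteq> K}"

(* l^2(K)^n, elements represented as functions on K x {0..<n} (zero elsewhere) *)
definition l2n :: "'g set \<Rightarrow> nat \<Rightarrow> ('g \<times> nat \<Rightarrow> complex) set" where
  "l2n K n = {\<xi>. (\<forall>x i. \<xi> (x, i) \<noteq> 0 \<longrightarrow> x \<in> K \<and> i < n) \<and>
                 (\<lambda>p. (cmod (\<xi> p))\<^sup>2) summable_on UNIV}"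

definition l2_inner :: "('a \<Rightarrow> complex) \<Rightarrow> ('a \<Rightarrow> complex) \<Rightarrow> complex" where
  "l2_inner \<xi> \<eta> = (\<Sum>\<^sub>\<infinity>p. \<xi> p * cnj (\<eta> p))"

definition orth_proj :: "('a \<Rightarrow> complex) set \<Rightarrow> ('a \<Rightarrow> complex) \<Rightarrow> ('a \<Rightarrow> complex)" where
  "orth_proj V \<xi> = (THE w. w \<in> V \<and> (\<forall>u\<in>V. l2_inner (\<lambda>p. \<xi> p - w p) u = 0))"

(* left multiplication (convolution) by an m x n matrix A over CK,
   (A xi)_i = sum_j a_ij * xi_j,  (a * xi)(x) = sum_g a(g) xi(g^{-1} x) *)
definition mat_mult :: "(nat \<Rightarrow> nat \<Rightarrow> 'g::group_add \<Rightarrow> complex) \<Rightarrow> nat \<Rightarrow>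
                        ('g \<times> nat \<Rightarrow> complex) \<Rightarrow> ('g \<times> nat \<Rightarrow> complex)" where
  "mat_mult A n \<xi> = (\<lambda>(x, i). \<Sum>j<n. \<Sum>g\<in>{g. A i j g \<noteq> 0}. A i j g * \<xi> (- g + x, j))"

definition mat_kernel :: "'g::group_add set \<Rightarrow> (nat \<Rightarrow> nat \<Rightarrow> 'g \<Rightarrow> complex) \<Rightarrow> nat \<Rightarrow> nat \<Rightarrow>
                          ('g \<times> nat \<Rightarrow> complex) set" where
  "mat_kernel K A m n = {\<xi> \<in> l2n K n. \<forall>x\<in>K. \<forall>i<m. mat_mult A n \<xi> (x, i) = 0}"

definition delta_vec :: "nat \<Rightarrow> ('g::zero \<times> nat \<Rightarrow> complex)" where
  "delta_vec i = (\<lambda>p. if p = (0, i) then 1 else 0)"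

(* von Neumann dimension over N(K) of a closed invariant subspace V of l^2(K)^n:
   trace of the orthogonal projection, sum_i <P delta_{1} e_i, delta_{1} e_i> *)
definition vn_dim :: "nat \<Rightarrow> ('g::zero \<times> nat \<Rightarrow> complex) set \<Rightarrow> real" where
  "vn_dim n V = (\<Sum>i<n. Re (l2_inner (orth_proj V (delta_vec i)) (delta_vec i)))"

definition strong_atiyah :: "'g::group_add set \<Rightarrow> bool" where
  "strong_atiyah K \<longleftrightarrow>
     (\<forall>m n (A :: nat \<Rightarrow> nat \<Rightarrow> 'g \<Rightarrow> complex).
        (\<forall>i<m. \<forall>j<n. A i j \<in> group_ring K) \<longrightarrow> vn_dim n (mat_kernel K A m n) \<in> \<int>)"

end

theory Submission
  imports Defs
begin

text \<open>A vanishing combination \<open>\<Sum>\<^sub>j c\<^sub>j L(k\<^sub>j) f\<close> means that, for every \<open>x\<close>, the fibre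
  \<open>y \<mapsto> f (y + x)\<close> on \<open>K\<close> is annihilated by convolution with \<open>a = \<Sum>\<^sub>j c\<^sub>j \<delta>\<^bsub>k\<^sub>j\<^esub> \<in> \<complex>K\<close>.
  Because the translates of a small neighbourhood by the countable discrete group \<open>K\<close> are
  disjoint, almost every fibre is square summable, hence lies in the kernel of \<open>a\<close> on \<open>l\<^sup>2(K)\<close>.
  That kernel is a closed \<open>K\<close>-invariant subspace; its von Neumann dimension, the squared norm of
  the projection of \<open>\<delta>\<^sub>0\<close>, lies in \<open>[0, 1]\<close> and is an integer by the strong Atiyah conjecture.
  Dimension \<open>1\<close> would put \<open>\<delta>\<^sub>0\<close> in the kernel and force \<open>a = 0\<close>, so the kernel is zero, every
  fibre vanishes, and \<open>f = 0\<close> almost everywhere.\<close>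

section \<open>Square-summable functions\<close>

definition square_summable :: "('a \<Rightarrow> complex) \<Rightarrow> bool" where
  "square_summable x \<longleftrightarrow> (\<lambda>p. (cmod (x p))\<^sup>2) summable_on UNIV"

definition l2_norm_sq :: "('a \<Rightarrow> complex) \<Rightarrow> real" where
  "l2_norm_sq x = (\<Sum>\<^sub>\<infinity>p. (cmod (x p))\<^sup>2)"

lemma square_summable_zero: "square_summable (\<lambda>_. 0)"
  unfolding square_summable_def by simp

lemma square_summable_cmult:
  assumes "square_summable x" shows "square_summable (\<lambda>p. c * x p)"
proof -
  have "(\<lambda>p. (cmod c)\<^sup>2 * (cmod (x p))\<^sup>2) summable_on UNIV"
    using assms unfolding square_summable_def by (intro summable_on_cmult_right)
  then show ?thesis unfolding square_summable_def by (simp add: norm_mult power_mult_distrib)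
qed

lemma square_summable_add:
  assumes "square_summable x" "square_summable y" shows "square_summable (\<lambda>p. x p + y p)"
proof -
  have "(\<lambda>p. 2 * (cmod (x p))\<^sup>2 + 2 * (cmod (y p))\<^sup>2) summable_on UNIV"
    using assms unfolding square_summable_def by (intro summable_on_add summable_on_cmult_right)
  moreover have "(cmod (x p + y p))\<^sup>2 \<le> 2 * (cmod (x p))\<^sup>2 + 2 * (cmod (y p))\<^sup>2" for p
  proof -
    have "(cmod (x p + y p))\<^sup>2 \<le> (cmod (x p) + cmod (y p))\<^sup>2"
      by (simp add: power_mono norm_triangle_ineq)
    also have "\<dots> \<le> 2 * (cmod (x p))\<^sup>2 + 2 * (cmod (y p))\<^sup>2"
      using sum_squares_bound[of "cmod (x p)" "cmod (y p)"] by (simp add: power2_sum)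
    finally show ?thesis .
  qed
  ultimately show ?thesis unfolding square_summable_def
    by (rule summable_on_comparison_test) auto
qed

lemma square_summable_diff:
  assumes "square_summable x" "square_summable y" shows "square_summable (\<lambda>p. x p - y p)"
  using square_summable_add[OF assms(1) square_summable_cmult[OF assms(2), of "-1"]] by simp

lemma l2_inner_summable:
  assumes "square_summable x" "square_summable y"
  shows "(\<lambda>p. x p * cnj (y p)) summable_on UNIV"
proof -
  have "(\<lambda>p. (cmod (x p))\<^sup>2 + (cmod (y p))\<^sup>2) summable_on UNIV"
    using assms unfolding square_summable_def by (intro summable_on_add)
  moreover have "norm (x p * cnj (y p)) \<le> (cmod (x p))\<^sup>2 + (cmod (y p))\<^sup>2" for p
    using sum_squares_bound[of "cmod (x p)" "cmod (y p)"]
      mult_nonneg_nonneg[OF norm_ge_zero norm_ge_zero, of "x p" "y p"]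
    by (simp only: norm_mult complex_mod_cnj)
  ultimately have "(\<lambda>p. norm (x p * cnj (y p))) summable_on UNIV"
    by (rule summable_on_comparison_test) auto
  then show ?thesis by (rule abs_summable_summable)
qed

lemma l2_norm_sq_nonneg: "l2_norm_sq x \<ge> 0"
  unfolding l2_norm_sq_def by (rule infsum_nonneg) auto

lemma l2_inner_self:
  assumes "square_summable x" shows "l2_inner x x = of_real (l2_norm_sq x)"
proof -
  have "((\<lambda>p. complex_of_real ((cmod (x p))\<^sup>2)) has_sum of_real (l2_norm_sq x)) UNIV"
    using assms unfolding square_summable_def l2_norm_sq_def
    by (intro has_sum_of_real has_sum_infsum)
  moreover have "complex_of_real ((cmod (x p))\<^sup>2) = x p * cnj (x p)" for p
    by (simp add: complex_mult_cnj cmod_def)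
  ultimately show ?thesis unfolding l2_inner_def by (simp add: infsumI)
qed

lemma l2_inner_commute: "l2_inner y x = cnj (l2_inner x y)"
  unfolding l2_inner_def by (simp flip: infsum_cnj add: mult.commute)

lemma l2_inner_add_left:
  assumes "square_summable x" "square_summable y" "square_summable z"
  shows "l2_inner (\<lambda>p. x p + y p) z = l2_inner x z + l2_inner y z"
  unfolding l2_inner_def using l2_inner_summable[OF assms(1,3)] l2_inner_summable[OF assms(2,3)]
  by (simp add: distrib_right infsum_add)

lemma l2_inner_cmult_left:
  assumes "square_summable x" "square_summable z"
  shows "l2_inner (\<lambda>p. c * x p) z = c * l2_inner x z"
  unfolding l2_inner_def using l2_inner_summable[OF assms]
  by (simp add: mult.assoc infsum_cmult_right)

lemma l2_inner_diff_left:
  assumes "square_summable x" "square_summable y" "square_summable z"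
  shows "l2_inner (\<lambda>p. x p - y p) z = l2_inner x z - l2_inner y z"
  using l2_inner_add_left[OF assms(1) square_summable_cmult[OF assms(2)] assms(3), of "-1"]
    l2_inner_cmult_left[OF assms(2,3), of "-1"]
  by simp

lemma l2_inner_add_right:
  assumes "square_summable x" "square_summable y" "square_summable z"
  shows "l2_inner z (\<lambda>p. x p + y p) = l2_inner z x + l2_inner z y"
  by (metis assms l2_inner_add_left l2_inner_commute complex_cnj_add)

lemma l2_inner_diff_right:
  assumes "square_summable x" "square_summable y" "square_summable z"
  shows "l2_inner z (\<lambda>p. x p - y p) = l2_inner z x - l2_inner z y"
  by (metis assms l2_inner_diff_left l2_inner_commute complex_cnj_diff)

lemma l2_inner_cmult_right:
  assumes "square_summable x" "square_summable z"
  shows "l2_inner z (\<lambda>p. c * x p) = cnj c * l2_inner z x"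
  by (metis assms l2_inner_cmult_left l2_inner_commute complex_cnj_mult complex_cnj_cnj)

lemma l2_norm_sq_eq_Re_inner:
  assumes "square_summable x" shows "l2_norm_sq x = Re (l2_inner x x)"
  using l2_inner_self[OF assms] by simp

lemma sum_le_l2_norm_sq:
  assumes "square_summable x" "finite F" shows "(\<Sum>p\<in>F. (cmod (x p))\<^sup>2) \<le> l2_norm_sq x"
proof -
  have "(\<Sum>\<^sub>\<infinity>p\<in>F. (cmod (x p))\<^sup>2) \<le> (\<Sum>\<^sub>\<infinity>p. (cmod (x p))\<^sup>2)"
    using assms unfolding square_summable_def by (intro infsum_mono_neutral) auto
  then show ?thesis using assms(2) unfolding l2_norm_sq_def by simp
qed

lemma l2_norm_sq_eq_0_imp:
  assumes "square_summable x" "l2_norm_sq x = 0" shows "x = (\<lambda>_. 0)"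
  using sum_le_l2_norm_sq[OF assms(1), of "{p}" for p] assms(2) by (auto simp: fun_eq_iff)

lemma l2_norm_sq_cmult:
  assumes "square_summable x" shows "l2_norm_sq (\<lambda>p. c * x p) = (cmod c)\<^sup>2 * l2_norm_sq x"
  using assms unfolding l2_norm_sq_def square_summable_def
  by (simp add: norm_mult power_mult_distrib infsum_cmult_right)

lemma l2_parallelogram:
  assumes "square_summable x" "square_summable y"
  shows "l2_norm_sq (\<lambda>p. x p + y p) + l2_norm_sq (\<lambda>p. x p - y p) = 2 * l2_norm_sq x + 2 * l2_norm_sq y"
  using assms square_summable_add[OF assms] square_summable_diff[OF assms]
  by (simp add: l2_norm_sq_eq_Re_inner l2_inner_add_left l2_inner_add_right
      l2_inner_diff_left l2_inner_diff_right)

lemma l2_norm_sq_diff_expand: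
  assumes "square_summable x" "square_summable u"
  shows "l2_norm_sq (\<lambda>p. x p - t * u p) =
         l2_norm_sq x - 2 * Re (cnj t * l2_inner x u) + (cmod t)\<^sup>2 * l2_norm_sq u"
proof -
  have tu: "square_summable (\<lambda>p. t * u p)" using assms(2) by (rule square_summable_cmult)
  have "l2_inner (\<lambda>p. x p - t * u p) (\<lambda>p. x p - t * u p) =
        l2_inner x x - cnj t * l2_inner x u - cnj (cnj t * l2_inner x u) + t * cnj t * l2_inner u u"
    using assms tu square_summable_diff[OF assms(1) tu]
    by (simp add: l2_inner_diff_left l2_inner_diff_right l2_inner_cmult_left
        l2_inner_cmult_right l2_inner_commute[of u x] algebra_simps)
  then show ?thesis
    using assms square_summable_diff[OF assms(1) tu]
    by (simp add: l2_norm_sq_eq_Re_inner complex_mult_cnj cmod_def)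
qed

section \<open>Orthogonal projection onto closed subspaces\<close>

lemma l2_norm_sq_pointwise_limit:
  assumes "\<And>n. square_summable (s n)" and "\<And>p. (\<lambda>n. s n p) \<longlonglongrightarrow> w p"
    and "\<And>n. l2_norm_sq (s n) \<le> b n" and "b \<longlonglongrightarrow> c"
  shows "square_summable w" and "l2_norm_sq w \<le> c"
proof -
  have finite_sums: "(\<Sum>p\<in>F. (cmod (w p))\<^sup>2) \<le> c" if "finite F" for F
  proof (rule LIMSEQ_le)
    show "(\<lambda>n. \<Sum>p\<in>F. (cmod (s n p))\<^sup>2) \<longlonglongrightarrow> (\<Sum>p\<in>F. (cmod (w p))\<^sup>2)"
      by (intro tendsto_intros assms(2))
    show "\<exists>N. \<forall>n\<ge>N. (\<Sum>p\<in>F. (cmod (s n p))\<^sup>2) \<le> b n"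
      using sum_le_l2_norm_sq[OF assms(1) that] assms(3) order_trans by blast
  qed fact
  show ww: "square_summable w"
    unfolding square_summable_def
    by (rule nonneg_bdd_above_summable_on) (auto intro!: bdd_aboveI[of _ c] finite_sums)
  show "l2_norm_sq w \<le> c"
    using ww unfolding l2_norm_sq_def square_summable_def
    by (intro infsum_le_finite_sums finite_sums) auto
qed

lemma Cauchy_pointwise_if_l2_Cauchy:
  assumes "\<And>n. square_summable (s n)"
    and "\<And>e. e > 0 \<Longrightarrow> \<exists>N. \<forall>m\<ge>N. \<forall>n\<ge>N. l2_norm_sq (\<lambda>p. s m p - s n p) < e"
  shows "Cauchy (\<lambda>n. s n p)"
proof (rule CauchyI)
  fix e :: real assume "e > 0"
  then obtain N where N: "\<forall>m\<ge>N. \<forall>n\<ge>N. l2_norm_sq (\<lambda>p. s m p - s n p) < e\<^sup>2"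
    using assms(2)[of "e\<^sup>2"] by auto
  show "\<exists>N. \<forall>m\<ge>N. \<forall>n\<ge>N. norm (s m p - s n p) < e"
  proof (intro exI allI impI)
    fix m n assume "N \<le> m" "N \<le> n"
    then have "(norm (s m p - s n p))\<^sup>2 < e\<^sup>2"
      using sum_le_l2_norm_sq[OF square_summable_diff[OF assms(1) assms(1)], of "{p}" m n] N
      by fastforce
    then show "norm (s m p - s n p) < e"
      using \<open>e > 0\<close> by (simp add: power2_less_imp_less)
  qed
qed

text \<open>Closedness is only required under square-summable pointwise limits: this is what a
  minimising sequence produces, and it is immediate for kernels.\<close>

locale l2_closed_subspace =
  fixes V :: "('a \<Rightarrow> complex) set"
  assumes square_summable_mem: "v \<in> V \<Longrightarrow> square_summable v"
    and zero_mem: "(\<lambda>_. 0) \<in> V"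
    and add_mem: "u \<in> V \<Longrightarrow> v \<in> V \<Longrightarrow> (\<lambda>p. u p + v p) \<in> V"
    and cmult_mem: "v \<in> V \<Longrightarrow> (\<lambda>p. c * v p) \<in> V"
    and limit_mem: "(\<And>n. s n \<in> V) \<Longrightarrow> (\<And>p. (\<lambda>n. s n p) \<longlonglongrightarrow> w p) \<Longrightarrow> square_summable w \<Longrightarrow> w \<in> V"
begin

lemma diff_mem: "u \<in> V \<Longrightarrow> v \<in> V \<Longrightarrow> (\<lambda>p. u p - v p) \<in> V"
  using add_mem[of u "\<lambda>p. (-1) * v p"] cmult_mem[of v "-1"] by simp

lemma distance_parallelogram_bound:
  assumes \<delta>: "square_summable \<delta>" and d: "\<And>v. v \<in> V \<Longrightarrow> d \<le> l2_norm_sq (\<lambda>p. \<delta> p - v p)"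
    and "u \<in> V" "v \<in> V"
  shows "l2_norm_sq (\<lambda>p. u p - v p) \<le>
           2 * l2_norm_sq (\<lambda>p. \<delta> p - u p) + 2 * l2_norm_sq (\<lambda>p. \<delta> p - v p) - 4 * d"
proof -
  define m where "m = (\<lambda>p. (1/2) * (u p + v p))"
  have mV: "m \<in> V" unfolding m_def using assms(3,4) by (intro cmult_mem add_mem)
  have sq: "square_summable (\<lambda>p. \<delta> p - v p)" "square_summable (\<lambda>p. \<delta> p - u p)"
    using \<delta> assms(3,4) by (auto intro: square_summable_diff square_summable_mem)
  have "(\<lambda>p. (\<delta> p - v p) + (\<delta> p - u p)) = (\<lambda>p. 2 * (\<delta> p - m p))"
    unfolding m_def by (auto simp: algebra_simps)
  then have "l2_norm_sq (\<lambda>p. (\<delta> p - v p) + (\<delta> p - u p)) = 4 * l2_norm_sq (\<lambda>p. \<delta> p - m p)"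
    using l2_norm_sq_cmult[OF square_summable_diff[OF \<delta> square_summable_mem[OF mV]], of 2] by simp
  moreover have "(\<lambda>p. (\<delta> p - v p) - (\<delta> p - u p)) = (\<lambda>p. u p - v p)" by auto
  ultimately show ?thesis
    using l2_parallelogram[OF sq] d[OF mV] by simp
qed

lemma minimizing_sequence_Cauchy:
  assumes \<delta>: "square_summable \<delta>" and d: "\<And>v. v \<in> V \<Longrightarrow> d \<le> l2_norm_sq (\<lambda>p. \<delta> p - v p)"
    and sV: "\<And>n. s n \<in> V"
    and s_close: "\<And>n. l2_norm_sq (\<lambda>p. \<delta> p - s n p) < d + inverse (real (Suc n))"
  shows "Cauchy (\<lambda>n. s n p)"
proof (rule Cauchy_pointwise_if_l2_Cauchy)
  show "square_summable (s n)" for n using sV by (rule square_summable_mem)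
  fix e :: real assume "e > 0"
  then obtain N where N: "inverse (real (Suc N)) < e / 4" using reals_Archimedean[of "e / 4"] by auto
  have "l2_norm_sq (\<lambda>p. s m p - s n p) < e" if "N \<le> m" "N \<le> n" for m n
  proof -
    have "inverse (real (Suc m)) \<le> inverse (real (Suc N))" "inverse (real (Suc n)) \<le> inverse (real (Suc N))"
      using that by (auto simp: field_simps)
    then show ?thesis
      using distance_parallelogram_bound[OF \<delta> d sV sV, of m n] s_close[of m] s_close[of n] N
      by linarith
  qed
  then show "\<exists>N. \<forall>m\<ge>N. \<forall>n\<ge>N. l2_norm_sq (\<lambda>p. s m p - s n p) < e" by blast
qed

lemma best_approximation_exists:
  assumes \<delta>: "square_summable \<delta>"
  shows "\<exists>w\<in>V. \<forall>v\<in>V. l2_norm_sq (\<lambda>p. \<delta> p - w p) \<le> l2_norm_sq (\<lambda>p. \<delta> p - v p)"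
proof -
  define dist where "dist v = l2_norm_sq (\<lambda>p. \<delta> p - v p)" for v
  define d where "d = (INF v\<in>V. dist v)"
  have bdd: "bdd_below (dist ` V)"
    unfolding dist_def by (rule bdd_belowI[of _ 0]) (auto simp: l2_norm_sq_nonneg)
  have d_le: "d \<le> dist v" if "v \<in> V" for v
    unfolding d_def using bdd that by (rule cINF_lower)
  have "\<exists>v\<in>V. dist v < d + inverse (real (Suc n))" for n
  proof -
    have "(INF v\<in>V. dist v) < d + inverse (real (Suc n))" unfolding d_def by simp
    moreover have "V \<noteq> {}" using zero_mem by blast
    ultimately show ?thesis using cINF_less_iff[OF _ bdd] by blast
  qed
  then obtain s where sV: "\<And>n. s n \<in> V" and s_close: "\<And>n. dist (s n) < d + inverse (real (Suc n))"
    by metis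
  have s_sq: "\<And>n. square_summable (s n)" using sV by (rule square_summable_mem)
  have "Cauchy (\<lambda>n. s n p)" for p
    using minimizing_sequence_Cauchy[OF \<delta> d_le[unfolded dist_def] sV s_close[unfolded dist_def]] .
  then obtain w where lim: "\<And>p. (\<lambda>n. s n p) \<longlonglongrightarrow> w p"
    unfolding Cauchy_convergent_iff convergent_def by metis
  have lim_diff: "(\<lambda>n. \<delta> p - s n p) \<longlonglongrightarrow> \<delta> p - w p" for p
    by (intro tendsto_intros lim)
  have diff_sq: "\<And>n. square_summable (\<lambda>p. \<delta> p - s n p)"
    using \<delta> s_sq by (rule square_summable_diff)
  have bound: "\<And>n. l2_norm_sq (\<lambda>p. \<delta> p - s n p) \<le> d + inverse (real (Suc n))"
    using s_close less_imp_le unfolding dist_def by blast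
  have w_sq: "square_summable w"
    using square_summable_diff[OF \<delta> l2_norm_sq_pointwise_limit(1)[OF diff_sq lim_diff bound
          LIMSEQ_inverse_real_of_nat_add]] by simp
  show ?thesis
  proof (intro bexI ballI)
    show "w \<in> V" using sV lim w_sq by (rule limit_mem)
    show "l2_norm_sq (\<lambda>p. \<delta> p - w p) \<le> l2_norm_sq (\<lambda>p. \<delta> p - v p)" if "v \<in> V" for v
      using l2_norm_sq_pointwise_limit(2)[OF diff_sq lim_diff bound LIMSEQ_inverse_real_of_nat_add]
        d_le[OF that] unfolding dist_def by linarith
  qed
qed

lemma best_approximation_orthogonal:
  assumes \<delta>: "square_summable \<delta>" and wV: "w \<in> V"
    and best: "\<And>v. v \<in> V \<Longrightarrow> l2_norm_sq (\<lambda>p. \<delta> p - w p) \<le> l2_norm_sq (\<lambda>p. \<delta> p - v p)"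
    and uV: "u \<in> V"
  shows "l2_inner (\<lambda>p. \<delta> p - w p) u = 0"
proof -
  define x where "x = (\<lambda>p. \<delta> p - w p)"
  define z where "z = l2_inner x u"
  define r where "r = inverse (l2_norm_sq u + 1)"
  have x_sq: "square_summable x"
    unfolding x_def using \<delta> square_summable_mem[OF wV] by (rule square_summable_diff)
  have u_sq: "square_summable u" using uV by (rule square_summable_mem)
  have r_pos: "r > 0" and r_le: "r * l2_norm_sq u \<le> 1"
    unfolding r_def using l2_norm_sq_nonneg[of u] by (auto simp: field_simps)
  \<comment> \<open>compare with \<open>w + r z u\<close>; the factor \<open>r\<close> keeps the quadratic term below the linear one\<close>
  have "(\<lambda>p. \<delta> p - (w p + of_real r * z * u p)) = (\<lambda>p. x p - of_real r * z * u p)"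
    unfolding x_def by (auto simp: algebra_simps)
  then have "l2_norm_sq x \<le> l2_norm_sq (\<lambda>p. x p - of_real r * z * u p)"
    using best[of "\<lambda>p. w p + of_real r * z * u p"] wV uV unfolding x_def by (simp add: add_mem cmult_mem)
  also have "\<dots> = l2_norm_sq x - 2 * r * (cmod z)\<^sup>2 + r\<^sup>2 * (cmod z)\<^sup>2 * l2_norm_sq u"
  proof -
    have inner: "cnj (of_real r * z) * z = of_real (r * (cmod z)\<^sup>2)"
      unfolding of_real_mult complex_norm_square by (simp add: ac_simps)
    have norm: "(cmod (of_real r * z))\<^sup>2 = r\<^sup>2 * (cmod z)\<^sup>2"
      by (simp add: norm_mult power_mult_distrib)
    show ?thesis
      using l2_norm_sq_diff_expand[OF x_sq u_sq, of "of_real r * z", folded z_def]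
      unfolding inner norm Re_complex_of_real by simp
  qed
  finally have "2 * r * (cmod z)\<^sup>2 \<le> r * (cmod z)\<^sup>2 * (r * l2_norm_sq u)"
    by (simp add: power2_eq_square algebra_simps)
  also have "\<dots> \<le> r * (cmod z)\<^sup>2"
    using mult_left_mono[OF r_le, of "r * (cmod z)\<^sup>2"] r_pos by simp
  finally have "z = 0" using r_pos by (simp add: mult_le_0_iff)
  then show ?thesis unfolding z_def x_def .
qed

lemma orth_proj_eqI:
  assumes \<delta>: "square_summable \<delta>" and wV: "w \<in> V"
    and orth: "\<And>u. u \<in> V \<Longrightarrow> l2_inner (\<lambda>p. \<delta> p - w p) u = 0"
  shows "orth_proj V \<delta> = w"
  unfolding orth_proj_def
proof (rule the_equality)
  show "w \<in> V \<and> (\<forall>u\<in>V. l2_inner (\<lambda>p. \<delta> p - w p) u = 0)" using wV orth by blast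
  fix w' assume w': "w' \<in> V \<and> (\<forall>u\<in>V. l2_inner (\<lambda>p. \<delta> p - w' p) u = 0)"
  define e where "e = (\<lambda>p. w p - w' p)"
  have eV: "e \<in> V" unfolding e_def using wV w' by (blast intro: diff_mem)
  have sq: "square_summable w" "square_summable w'" "square_summable e"
    using wV w' eV by (auto intro: square_summable_mem)
  have "(\<lambda>p. (\<delta> p - w' p) - (\<delta> p - w p)) = e" unfolding e_def by auto
  then have "l2_inner e e = l2_inner (\<lambda>p. \<delta> p - w' p) e - l2_inner (\<lambda>p. \<delta> p - w p) e"
    using l2_inner_diff_left[OF square_summable_diff[OF \<delta> sq(2)] square_summable_diff[OF \<delta> sq(1)] sq(3)]
    by simp
  then have "l2_norm_sq e = 0" using orth[OF eV] w' eV l2_inner_self[OF sq(3)] by simp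
  then show "w' = w" using l2_norm_sq_eq_0_imp[OF sq(3)] unfolding e_def by (auto simp: fun_eq_iff)
qed

lemma orth_proj:
  assumes "square_summable \<delta>"
  shows "orth_proj V \<delta> \<in> V" and "\<And>u. u \<in> V \<Longrightarrow> l2_inner (\<lambda>p. \<delta> p - orth_proj V \<delta> p) u = 0"
proof -
  obtain w where "w \<in> V" and "\<forall>v\<in>V. l2_norm_sq (\<lambda>p. \<delta> p - w p) \<le> l2_norm_sq (\<lambda>p. \<delta> p - v p)"
    using best_approximation_exists[OF assms] by blast
  then have "w \<in> V" and "\<And>u. u \<in> V \<Longrightarrow> l2_inner (\<lambda>p. \<delta> p - w p) u = 0"
    using best_approximation_orthogonal[OF assms] by auto
  then show "orth_proj V \<delta> \<in> V" "\<And>u. u \<in> V \<Longrightarrow> l2_inner (\<lambda>p. \<delta> p - orth_proj V \<delta> p) u = 0"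
    using orth_proj_eqI[OF assms] by auto
qed

lemma orth_proj_pythagoras:
  assumes \<delta>: "square_summable \<delta>"
  defines "P \<equiv> orth_proj V \<delta>"
  shows "l2_inner P \<delta> = of_real (l2_norm_sq P)"
    and "l2_norm_sq (\<lambda>p. \<delta> p - P p) = l2_norm_sq \<delta> - l2_norm_sq P"
proof -
  have P_sq: "square_summable P" unfolding P_def using orth_proj(1)[OF \<delta>] by (rule square_summable_mem)
  have r_sq: "square_summable (\<lambda>p. \<delta> p - P p)" using \<delta> P_sq by (rule square_summable_diff)
  have "l2_inner (\<lambda>p. \<delta> p - P p) P = 0" unfolding P_def using orth_proj[OF \<delta>] by blast
  then have "l2_inner \<delta> P = l2_inner P P" using \<delta> P_sq by (simp add: l2_inner_diff_left)
  then show P\<delta>: "l2_inner P \<delta> = of_real (l2_norm_sq P)"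
    using l2_inner_commute[of P \<delta>] l2_inner_self[OF P_sq] by simp
  have "l2_inner (\<lambda>p. \<delta> p - P p) (\<lambda>p. \<delta> p - P p) = l2_inner (\<lambda>p. \<delta> p - P p) \<delta>"
    using \<delta> P_sq r_sq \<open>l2_inner (\<lambda>p. \<delta> p - P p) P = 0\<close> by (simp add: l2_inner_diff_right)
  also have "\<dots> = l2_inner \<delta> \<delta> - l2_inner P \<delta>" using \<delta> P_sq by (simp add: l2_inner_diff_left)
  finally show "l2_norm_sq (\<lambda>p. \<delta> p - P p) = l2_norm_sq \<delta> - l2_norm_sq P"
    using P\<delta> l2_inner_self[OF \<delta>] l2_inner_self[OF r_sq] by (simp flip: of_real_diff)
qed

end

section \<open>Kernels of convolution by group ring elements\<close>

lemma square_summable_delta_vec: "square_summable (delta_vec i :: 'g::zero \<times> nat \<Rightarrow> complex)"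
  unfolding square_summable_def delta_vec_def
  by (rule summable_on_cong_neutral[where S="{(0, i)}", THEN iffD1]) auto

lemma l2_inner_delta_vec: "l2_inner \<xi> (delta_vec i) = \<xi> (0, i)"
proof -
  have "l2_inner \<xi> (delta_vec i) = (\<Sum>\<^sub>\<infinity>p\<in>{(0, i)}. \<xi> p * cnj (delta_vec i p))"
    unfolding l2_inner_def by (rule infsum_cong_neutral) (auto simp: delta_vec_def)
  then show ?thesis by (simp add: delta_vec_def)
qed

lemma l2_norm_sq_delta_vec: "l2_norm_sq (delta_vec i :: 'g::zero \<times> nat \<Rightarrow> complex) = 1"
proof -
  have "delta_vec i (0::'g, i) = 1" by (simp add: delta_vec_def)
  then show ?thesis
    using l2_inner_self[OF square_summable_delta_vec, of i] l2_inner_delta_vec[of "delta_vec i" i]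
    by (metis of_real_eq_1_iff)
qed

lemma mem_mat_kernel_1x1:
  "\<xi> \<in> mat_kernel K (\<lambda>_ _. a) 1 1 \<longleftrightarrow>
     (\<forall>y i. \<not> (y \<in> K \<and> i = 0) \<longrightarrow> \<xi> (y, i) = 0) \<and> square_summable \<xi> \<and>
     (\<forall>y\<in>K. (\<Sum>g | a g \<noteq> 0. a g * \<xi> (- g + y, 0)) = 0)"
  unfolding mat_kernel_def l2n_def square_summable_def mat_mult_def by auto

lemma l2_closed_subspace_mat_kernel: "l2_closed_subspace (mat_kernel K (\<lambda>_ _. a) 1 1)"
proof
  fix u v and c :: complex and s w
  show "v \<in> mat_kernel K (\<lambda>_ _. a) 1 1 \<Longrightarrow> square_summable v"
    unfolding mem_mat_kernel_1x1 by blast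
  show "(\<lambda>_. 0) \<in> mat_kernel K (\<lambda>_ _. a) 1 1"
    unfolding mem_mat_kernel_1x1 by (simp add: square_summable_zero)
  show "u \<in> mat_kernel K (\<lambda>_ _. a) 1 1 \<Longrightarrow> v \<in> mat_kernel K (\<lambda>_ _. a) 1 1 \<Longrightarrow>
        (\<lambda>p. u p + v p) \<in> mat_kernel K (\<lambda>_ _. a) 1 1"
    unfolding mem_mat_kernel_1x1 by (simp add: square_summable_add distrib_left sum.distrib)
  show "v \<in> mat_kernel K (\<lambda>_ _. a) 1 1 \<Longrightarrow> (\<lambda>p. c * v p) \<in> mat_kernel K (\<lambda>_ _. a) 1 1"
    unfolding mem_mat_kernel_1x1
    by (simp add: square_summable_cmult mult.left_commute flip: sum_distrib_left)
  assume sV: "\<And>n. s n \<in> mat_kernel K (\<lambda>_ _. a) 1 1" and lim: "\<And>p. (\<lambda>n. s n p) \<longlonglongrightarrow> w p"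
    and "square_summable w"
  have "w (y, i) = 0" if "\<not> (y \<in> K \<and> i = 0)" for y i
  proof -
    have "s n (y, i) = 0" for n using sV[of n] that unfolding mem_mat_kernel_1x1 by blast
    then show ?thesis using LIMSEQ_unique[OF lim[of "(y, i)"]] by simp
  qed
  moreover have "(\<Sum>g | a g \<noteq> 0. a g * w (- g + y, 0)) = 0" if "y \<in> K" for y
  proof -
    have "(\<lambda>n. \<Sum>g | a g \<noteq> 0. a g * s n (- g + y, 0)) \<longlonglongrightarrow> (\<Sum>g | a g \<noteq> 0. a g * w (- g + y, 0))"
      by (intro tendsto_intros lim)
    moreover have "(\<Sum>g | a g \<noteq> 0. a g * s n (- g + y, 0)) = 0" for n
      using sV[of n] that unfolding mem_mat_kernel_1x1 by blast
    ultimately show ?thesis by (simp add: LIMSEQ_const_iff)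
  qed
  ultimately show "w \<in> mat_kernel K (\<lambda>_ _. a) 1 1"
    unfolding mem_mat_kernel_1x1 using \<open>square_summable w\<close> by blast
qed

lemma mat_kernel_right_translate:
  assumes K: "is_subgroup K" and h: "h \<in> K" and \<xi>: "\<xi> \<in> mat_kernel K (\<lambda>_ _. a) 1 1"
  shows "(\<lambda>(y, i). \<xi> (y + h, i)) \<in> mat_kernel K (\<lambda>_ _. a) 1 1"
proof -
  have "bij_betw (\<lambda>(y, i). (y + h, i)) UNIV UNIV"
    by (rule bij_betwI[where g="\<lambda>(y, i). (y - h, i)"]) auto
  then have "(\<lambda>p. (cmod (\<xi> ((\<lambda>(y, i). (y + h, i)) p)))\<^sup>2) summable_on UNIV"
    using \<xi> summable_on_reindex_bij_betw[of _ UNIV UNIV "\<lambda>p. (cmod (\<xi> p))\<^sup>2"]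
    unfolding mem_mat_kernel_1x1 square_summable_def by blast
  then have "square_summable (\<lambda>(y, i). \<xi> (y + h, i))"
    unfolding square_summable_def by (simp add: case_prod_beta)
  moreover have "y + h \<in> K \<longleftrightarrow> y \<in> K" for y
    using K h unfolding is_subgroup_def by (metis add.assoc add.right_inverse add_0_right)
  ultimately show ?thesis
    using \<xi> unfolding mem_mat_kernel_1x1 by (simp add: add.assoc)
qed

lemma delta_vec_mem_mat_kernel_imp_zero:
  assumes a: "a \<in> group_ring K" and \<delta>: "delta_vec 0 \<in> mat_kernel K (\<lambda>_ _. a) 1 1"
  shows "a = (\<lambda>_. 0)"
proof
  fix y
  show "a y = 0"
  proof (cases "y \<in> K")
    case True
    have "(\<Sum>g | a g \<noteq> 0. a g * delta_vec 0 (- g + y, 0)) = (\<Sum>g | a g \<noteq> 0. if g = y then a g else 0)"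
      by (intro sum.cong) (auto simp: delta_vec_def add_eq_0_iff)
    also have "\<dots> = a y" using a unfolding group_ring_def by (auto simp: sum.delta)
    finally show ?thesis using \<delta> True unfolding mem_mat_kernel_1x1 by simp
  next
    case False
    then show ?thesis using a unfolding group_ring_def by auto
  qed
qed

lemma mat_kernel_eq_zero_if_vanish_at_origin:
  assumes K: "is_subgroup K"
    and origin: "\<And>u. u \<in> mat_kernel K (\<lambda>_ _. a) 1 1 \<Longrightarrow> u (0, 0) = 0"
    and \<xi>: "\<xi> \<in> mat_kernel K (\<lambda>_ _. a) 1 1"
  shows "\<xi> = (\<lambda>_. 0)"
proof
  fix p :: "'a \<times> nat"
  obtain y i where p: "p = (y, i)" by fastforce
  show "\<xi> p = 0"
  proof (cases "y \<in> K \<and> i = 0")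
    case True
    then show ?thesis
      using origin[OF mat_kernel_right_translate[OF K _ \<xi>, of y]] p by simp
  next
    case False
    then show ?thesis using \<xi> p unfolding mem_mat_kernel_1x1 by blast
  qed
qed

text \<open>The von Neumann dimension of the kernel is the squared norm of the projection \<open>P\<close>
  of the unit vector at the origin, a number in \<open>[0, 1]\<close>. If it is \<open>1\<close>, the unit vector lies in the
  kernel, forcing \<open>a = 0\<close>; if it is \<open>0\<close>, every kernel element vanishes at the origin, and
  hence everywhere by translation invariance.\<close>

lemma mat_kernel_trivial_if_strong_atiyah:
  assumes K: "is_subgroup K" and atiyah: "strong_atiyah K"
    and a: "a \<in> group_ring K" and a_nonzero: "a \<noteq> (\<lambda>_. 0)"
  shows "mat_kernel K (\<lambda>_ _. a) 1 1 = {\<lambda>_. 0}"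
proof -
  define V where "V = mat_kernel K (\<lambda>_ _. a) 1 1"
  define \<delta> where "\<delta> = (delta_vec 0 :: 'a \<times> nat \<Rightarrow> complex)"
  define P where "P = orth_proj V \<delta>"
  interpret V: l2_closed_subspace V unfolding V_def by (rule l2_closed_subspace_mat_kernel)
  have \<delta>_sq: "square_summable \<delta>" unfolding \<delta>_def by (rule square_summable_delta_vec)
  have "vn_dim 1 V = l2_norm_sq P"
    using V.orth_proj_pythagoras(1)[OF \<delta>_sq] unfolding vn_dim_def P_def \<delta>_def by simp
  moreover have "vn_dim 1 V \<in> \<int>"
    using atiyah a unfolding strong_atiyah_def V_def by simp
  moreover have residual: "l2_norm_sq (\<lambda>p. \<delta> p - P p) = 1 - l2_norm_sq P"
    using V.orth_proj_pythagoras(2)[OF \<delta>_sq] l2_norm_sq_delta_vec unfolding P_def \<delta>_def by simp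
  ultimately obtain k :: int where k: "l2_norm_sq P = of_int k"
    by (auto elim!: Ints_cases)
  have "0 \<le> k" "k \<le> 1"
    using l2_norm_sq_nonneg[of P] l2_norm_sq_nonneg[of "\<lambda>p. \<delta> p - P p"] residual k by simp_all
  then consider "l2_norm_sq P = 1" | "l2_norm_sq P = 0" using k by fastforce
  then show ?thesis
  proof cases
    case 1
    have P_sq: "square_summable P" unfolding P_def by (rule V.square_summable_mem[OF V.orth_proj(1)[OF \<delta>_sq]])
    have "(\<lambda>p. \<delta> p - P p) = (\<lambda>_. 0)"
      using l2_norm_sq_eq_0_imp[OF square_summable_diff[OF \<delta>_sq P_sq]] residual 1 by simp
    then have "\<delta> = P" by (simp add: fun_eq_iff)
    then have "\<delta> \<in> V" using V.orth_proj(1)[OF \<delta>_sq] unfolding P_def by simp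
    then show ?thesis
      using delta_vec_mem_mat_kernel_imp_zero[OF a] a_nonzero unfolding V_def \<delta>_def by blast
  next
    case 2
    have P_sq: "square_summable P" unfolding P_def by (rule V.square_summable_mem[OF V.orth_proj(1)[OF \<delta>_sq]])
    have "P = (\<lambda>_. 0)" using l2_norm_sq_eq_0_imp[OF P_sq 2] .
    then have "u (0, 0) = 0" if "u \<in> V" for u
      using V.orth_proj(2)[OF \<delta>_sq that] l2_inner_commute[of \<delta> u] l2_inner_delta_vec[of u 0]
      unfolding P_def \<delta>_def by simp
    then show ?thesis
      using mat_kernel_eq_zero_if_vanish_at_origin[OF K] V.zero_mem unfolding V_def by blast
  qed
qed

section \<open>Left Haar measure and fibres over a discrete subgroup\<close>

lemma left_haar_sets: "left_haar_measure \<mu> \<Longrightarrow> sets \<mu> = sets borel"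
  unfolding left_haar_measure_def by (rule conjunct1)

lemma left_haar_emeasure_translate:
  "left_haar_measure \<mu> \<Longrightarrow> A \<in> sets borel \<Longrightarrow> emeasure \<mu> ((\<lambda>x. g + x) ` A) = emeasure \<mu> A"
  unfolding left_haar_measure_def by (elim conjE) blast

lemma left_haar_space: "left_haar_measure \<mu> \<Longrightarrow> space \<mu> = UNIV"
  using sets_eq_imp_space_eq[OF left_haar_sets] by simp

lemma measurable_left_translate:
  fixes \<mu> :: "'g::{topological_group_add,t2_space} measure"
  assumes "left_haar_measure \<mu>"
  shows "(\<lambda>x. g + x) \<in> measurable \<mu> \<mu>"
  using measurable_cong_sets[OF left_haar_sets[OF assms] left_haar_sets[OF assms]]
  by (simp add: borel_measurable_continuous_onI continuous_intros)

lemma left_haar_distr_translate: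
  fixes \<mu> :: "'g::{topological_group_add,t2_space} measure"
  assumes H: "left_haar_measure \<mu>"
  shows "distr \<mu> \<mu> (\<lambda>x. g + x) = \<mu>"
proof (rule measure_eqI)
  fix A assume "A \<in> sets (distr \<mu> \<mu> (\<lambda>x. g + x))"
  then have A: "A \<in> sets borel" using left_haar_sets[OF H] by simp
  have "(\<lambda>x. g + x) -` A = (\<lambda>x. - g + x) ` A"
  proof (intro set_eqI iffI)
    fix x assume "x \<in> (\<lambda>x. g + x) -` A"
    then show "x \<in> (\<lambda>x. - g + x) ` A"
      by (intro image_eqI[of _ _ "g + x"]) (auto simp: add.assoc[symmetric])
  qed (auto simp: add.assoc[symmetric])
  then have "emeasure (distr \<mu> \<mu> (\<lambda>x. g + x)) A = emeasure \<mu> ((\<lambda>x. - g + x) ` A)"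
    using emeasure_distr[OF measurable_left_translate[OF H], of A] A left_haar_sets[OF H]
    by (simp add: left_haar_space[OF H])
  also have "\<dots> = emeasure \<mu> A" using H A by (rule left_haar_emeasure_translate)
  finally show "emeasure (distr \<mu> \<mu> (\<lambda>x. g + x)) A = emeasure \<mu> A" .
qed simp

lemma left_haar_nn_integral_translate:
  fixes \<mu> :: "'g::{topological_group_add,t2_space} measure"
  assumes H: "left_haar_measure \<mu>" and h: "h \<in> borel_measurable \<mu>"
  shows "(\<integral>\<^sup>+x. h (g + x) \<partial>\<mu>) = (\<integral>\<^sup>+x. h x \<partial>\<mu>)"
  using nn_integral_distr[OF measurable_left_translate[OF H], of h] h left_haar_distr_translate[OF H]
  by simp

lemma left_haar_AE_translate:
  fixes \<mu> :: "'g::{topological_group_add,t2_space} measure"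
  assumes H: "left_haar_measure \<mu>" and "AE x in \<mu>. P x"
  shows "AE x in \<mu>. P (g + x)"
proof -
  obtain N where N: "{x \<in> space \<mu>. \<not> P x} \<subseteq> N" "N \<in> null_sets \<mu>"
    using assms(2) by (auto elim!: AE_E)
  have "(\<lambda>x. g + x) -` N \<in> sets \<mu>"
    using measurable_sets[OF measurable_left_translate[OF H] null_setsD2[OF N(2)]]
    by (simp add: left_haar_space[OF H])
  moreover have "emeasure \<mu> ((\<lambda>x. g + x) -` N) = 0"
    using emeasure_distr[OF measurable_left_translate[OF H] null_setsD2[OF N(2)]] N(2)
      left_haar_distr_translate[OF H]
    by (simp add: left_haar_space[OF H] null_setsD1)
  ultimately show ?thesis
    using N(1) by (intro AE_I'[of "(\<lambda>x. g + x) -` N"]) (auto simp: left_haar_space[OF H])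
qed

lemma left_haar_AE_translates:
  fixes \<mu> :: "'g::{topological_group_add,t2_space} measure"
  assumes "left_haar_measure \<mu>" and "countable G" and "AE x in \<mu>. P x"
  shows "AE x in \<mu>. \<forall>g\<in>G. P (g + x)"
  using left_haar_AE_translate[OF assms(1,3)] by (simp add: AE_ball_countable[OF assms(2)])

lemma sigma_compact_countable_subcover:
  fixes W :: "'a::topological_space \<Rightarrow> 'a set"
  assumes "sigma_compact_type TYPE('a)" and "\<And>z. open (W z)" and "\<And>z. z \<in> W z"
  shows "\<exists>Z. countable Z \<and> (\<Union>z\<in>Z. W z) = UNIV"
proof -
  obtain C :: "nat \<Rightarrow> 'a set" where C: "\<And>n. compact (C n)" "(\<Union>n. C n) = UNIV"
    using assms(1) unfolding sigma_compact_type_def by blast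
  have "\<exists>F. finite F \<and> C n \<subseteq> (\<Union>z\<in>F. W z)" for n
  proof -
    have cover: "C n \<subseteq> (\<Union>z\<in>C n. W z)" using assms(3) by blast
    obtain F where "F \<subseteq> C n" "finite F" "C n \<subseteq> (\<Union>z\<in>F. W z)"
      by (rule compactE_image[OF C(1) assms(2) cover])
    then show ?thesis by blast
  qed
  then obtain F where F: "\<forall>n. finite (F n) \<and> C n \<subseteq> (\<Union>z\<in>F n. W z)"
    using choice[of "\<lambda>n F. finite F \<and> C n \<subseteq> (\<Union>z\<in>F. W z)"] by blast
  have "countable (\<Union>n. F n)" using F by (intro countable_UN) (auto intro: countable_finite)
  moreover have "x \<in> (\<Union>z\<in>(\<Union>n. F n). W z)" for x
  proof -
    obtain n where "x \<in> C n" using C(2) by blast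
    then show ?thesis using F by blast
  qed
  ultimately show ?thesis by blast
qed

lemma open_nbhd_differences_subset:
  fixes U :: "'g::topological_group_add set"
  assumes "open U" and "0 \<in> U"
  shows "\<exists>W. open W \<and> z \<in> W \<and> (\<forall>w1\<in>W. \<forall>w2\<in>W. w2 + - w1 \<in> U)"
proof -
  have "continuous_on UNIV (\<lambda>p::'g \<times> 'g. snd p + - fst p)" by (intro continuous_intros)
  then have "open ((\<lambda>p::'g \<times> 'g. snd p + - fst p) -` U)"
    using continuous_on_open_vimage[of UNIV "\<lambda>p::'g \<times> 'g. snd p + - fst p"] assms(1) by simp
  moreover have "(z, z) \<in> (\<lambda>p::'g \<times> 'g. snd p + - fst p) -` U" using assms(2) by simp
  ultimately obtain A B where "open A" "open B" "(z, z) \<in> A \<times> B"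
    "A \<times> B \<subseteq> (\<lambda>p::'g \<times> 'g. snd p + - fst p) -` U"
    by (rule open_prod_elim)
  then show ?thesis by (intro exI[of _ "A \<inter> B"]) auto
qed

lemma discrete_subgroup_nbhds:
  fixes K :: "'g::topological_group_add set"
  assumes "is_subgroup K" and "discrete_subset K"
  obtains W where "\<And>z. open (W z)" and "\<And>z. z \<in> W z"
    and "\<And>z w1 w2. w1 \<in> W z \<Longrightarrow> w2 \<in> W z \<Longrightarrow> w2 + - w1 \<in> K \<Longrightarrow> w1 = w2"
proof -
  have "0 \<in> K" using assms(1) unfolding is_subgroup_def by simp
  then obtain U where U: "open U" "U \<inter> K = {0}"
    using assms(2) unfolding discrete_subset_def by blast
  have "0 \<in> U" using U(2) by blast
  define good where "good z W \<longleftrightarrow> open W \<and> z \<in> W \<and> (\<forall>w1\<in>W. \<forall>w2\<in>W. w2 + - w1 \<in> U)" for z W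
  have "\<exists>W. good z W" for z
    unfolding good_def by (rule open_nbhd_differences_subset[OF U(1) \<open>0 \<in> U\<close>])
  then obtain W where W: "\<And>z. good z (W z)" by metis
  show ?thesis
  proof (rule that)
    show "open (W z)" "z \<in> W z" for z using W[of z] unfolding good_def by blast+
    fix z w1 w2 assume "w1 \<in> W z" "w2 \<in> W z" "w2 + - w1 \<in> K"
    then have "w2 + - w1 = 0" using W[of z] U(2) unfolding good_def by blast
    then show "w1 = w2" by (simp add: add_eq_0_iff)
  qed
qed

lemma countable_discrete_subgroup:
  fixes K :: "'g::topological_group_add set"
  assumes "sigma_compact_type TYPE('g)" and K: "is_subgroup K" "discrete_subset K"
  shows "countable K"
proof -
  obtain W where W: "\<And>z. open (W z)" "\<And>z. z \<in> W z"
    and W_K: "\<And>z w1 w2. w1 \<in> W z \<Longrightarrow> w2 \<in> W z \<Longrightarrow> w2 + - w1 \<in> K \<Longrightarrow> w1 = w2"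
    using discrete_subgroup_nbhds[OF K] by blast
  obtain Z where "countable Z" and Z: "(\<Union>z\<in>Z. W z) = UNIV"
    using sigma_compact_countable_subcover[OF assms(1) W] by blast
  have "finite (K \<inter> W z)" for z
  proof (cases "K \<inter> W z = {}")
    case False
    then obtain k where k: "k \<in> K \<inter> W z" by blast
    have "k' = k" if "k' \<in> K \<inter> W z" for k'
      using W_K[of k z k'] K(1) k that unfolding is_subgroup_def by blast
    then have "K \<inter> W z \<subseteq> {k}" by blast
    then show ?thesis by (rule finite_subset) simp
  qed simp
  then have "countable (\<Union>z\<in>Z. K \<inter> W z)"
    using \<open>countable Z\<close> by (intro countable_UN) (auto intro: countable_finite)
  moreover have "K = (\<Union>z\<in>Z. K \<inter> W z)" using Z by blast
  ultimately show ?thesis by simp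
qed

text \<open>If the translates \<open>e i + W\<close> are pairwise disjoint, integrating \<open>\<Sum>i. h (e i + x)\<close> over
  \<open>W\<close> gives at most \<open>\<integral>h\<close>.\<close>

lemma AE_suminf_translates_finite:
  fixes \<mu> :: "'g::{topological_group_add,t2_space} measure" and h :: "'g \<Rightarrow> ennreal"
  assumes H: "left_haar_measure \<mu>" and W: "W \<in> sets borel"
    and disjoint: "\<And>i j x y. x \<in> W \<Longrightarrow> y \<in> W \<Longrightarrow> e i + x = e j + y \<Longrightarrow> i = j"
    and h: "h \<in> borel_measurable \<mu>" and h_finite: "(\<integral>\<^sup>+x. h x \<partial>\<mu>) < \<infinity>"
  shows "AE x in \<mu>. x \<in> W \<longrightarrow> (\<Sum>i. h (e i + x)) < \<infinity>"
proof -
  define A where "A i = (\<lambda>y. - e i + y) -` W" for i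
  have [measurable]: "h \<in> borel_measurable \<mu>" "W \<in> sets \<mu>" using h W left_haar_sets[OF H] by auto
  have [measurable]: "(\<lambda>x. h (e i + x)) \<in> borel_measurable \<mu>" for i
    using measurable_comp[OF measurable_left_translate[OF H] h] by (simp add: o_def)
  have [measurable]: "A i \<in> sets \<mu>" for i
    using measurable_sets[OF measurable_left_translate[OF H] \<open>W \<in> sets \<mu>\<close>, of "- e i"]
    unfolding A_def by (simp add: left_haar_space[OF H])
  have "disjoint_family A"
    unfolding disjoint_family_on_def A_def
    using disjoint by (auto simp: add.assoc[symmetric])
  have translate: "(\<integral>\<^sup>+x. h (e i + x) * indicator W x \<partial>\<mu>) = (\<integral>\<^sup>+y. h y * indicator (A i) y \<partial>\<mu>)" for i
  proof -
    have "indicator (A i) (e i + x) = (indicator W x :: ennreal)" for x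
      unfolding A_def by (simp add: add.assoc[symmetric] indicator_def)
    then show ?thesis
      using left_haar_nn_integral_translate[OF H, of "\<lambda>y. h y * indicator (A i) y" "e i"] by simp
  qed
  have "(\<integral>\<^sup>+x. (\<Sum>i. h (e i + x) * indicator W x) \<partial>\<mu>) = (\<Sum>i. \<integral>\<^sup>+x. h (e i + x) * indicator W x \<partial>\<mu>)"
    by (rule nn_integral_suminf) measurable
  also have "\<dots> = (\<Sum>i. \<integral>\<^sup>+y. h y * indicator (A i) y \<partial>\<mu>)" by (simp only: translate)
  also have "\<dots> = (\<integral>\<^sup>+y. (\<Sum>i. h y * indicator (A i) y) \<partial>\<mu>)"
    by (rule nn_integral_suminf[symmetric]) measurable
  also have "\<dots> = (\<integral>\<^sup>+y. h y * indicator (\<Union>i. A i) y \<partial>\<mu>)"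
    by (simp only: ennreal_suminf_cmult suminf_indicator[OF \<open>disjoint_family A\<close>])
  also have "\<dots> \<le> (\<integral>\<^sup>+y. h y \<partial>\<mu>)"
    by (intro nn_integral_mono) (simp add: indicator_def)
  finally have "(\<integral>\<^sup>+x. (\<Sum>i. h (e i + x) * indicator W x) \<partial>\<mu>) \<noteq> \<infinity>"
    using h_finite by (auto simp: top_unique)
  then have "AE x in \<mu>. (\<Sum>i. h (e i + x) * indicator W x) \<noteq> \<infinity>"
    by (rule nn_integral_PInf_AE[rotated]) measurable
  then show ?thesis by eventually_elim (auto simp: indicator_def less_top)
qed

lemma AE_square_summable_on_translates:
  fixes \<mu> :: "'g::{topological_group_add,t2_space} measure" and f :: "'g \<Rightarrow> complex"
  assumes sc: "sigma_compact_type TYPE('g)" and H: "left_haar_measure \<mu>"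
    and K: "is_subgroup K" "discrete_subset K"
    and f: "f \<in> borel_measurable \<mu>" and f_sq: "integrable \<mu> (\<lambda>x. (cmod (f x))\<^sup>2)"
  shows "AE x in \<mu>. (\<lambda>y. (cmod (f (y + x)))\<^sup>2) summable_on K"
proof (cases "finite K")
  case False
  define e where "e = from_nat_into K"
  have "bij_betw e UNIV K"
    unfolding e_def using countable_discrete_subgroup[OF sc K] False by (rule bij_betw_from_nat_into)
  then have e_inj: "inj e" and e_range: "range e = K" by (auto simp: bij_betw_def)
  obtain W where W: "\<And>z. open (W z)" "\<And>z. z \<in> W z"
    and W_K: "\<And>z w1 w2. w1 \<in> W z \<Longrightarrow> w2 \<in> W z \<Longrightarrow> w2 + - w1 \<in> K \<Longrightarrow> w1 = w2"
    using discrete_subgroup_nbhds[OF K] by blast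
  obtain Z where "countable Z" and Z: "(\<Union>z\<in>Z. W z) = UNIV"
    using sigma_compact_countable_subcover[OF sc W] by blast
  have "e i = e j" if "x \<in> W z" "y \<in> W z" "e i + x = e j + y" for i j x y z
  proof -
    have "y + - x = - e j + (e i + x) + - x" using that(3) by (simp add: add.assoc)
    also have "\<dots> = - e j + e i" by (simp only: add.assoc right_minus add_0_right)
    also have "\<dots> \<in> K" using K(1) e_range unfolding is_subgroup_def by blast
    finally have "x = y" using W_K that(1,2) by blast
    then show ?thesis using that(3) by simp
  qed
  then have disjoint: "\<And>z i j x y. x \<in> W z \<Longrightarrow> y \<in> W z \<Longrightarrow> e i + x = e j + y \<Longrightarrow> i = j"
    using e_inj by (blast dest: injD)
  have "(\<integral>\<^sup>+x. ennreal ((cmod (f x))\<^sup>2) \<partial>\<mu>) < \<infinity>"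
    using integrableD(2)[OF f_sq] by (simp add: less_top)
  then have "AE x in \<mu>. x \<in> W z \<longrightarrow> (\<Sum>i. ennreal ((cmod (f (e i + x)))\<^sup>2)) < \<infinity>" for z
    using W(1) f by (intro AE_suminf_translates_finite[OF H _ disjoint]) auto
  then have "AE x in \<mu>. \<forall>z\<in>Z. x \<in> W z \<longrightarrow> (\<Sum>i. ennreal ((cmod (f (e i + x)))\<^sup>2)) < \<infinity>"
    by (subst AE_ball_countable[OF \<open>countable Z\<close>]) blast
  then show ?thesis
  proof eventually_elim
    case (elim x)
    obtain z where "z \<in> Z" "x \<in> W z" using Z by blast
    then have "(\<Sum>i. ennreal ((cmod (f (e i + x)))\<^sup>2)) \<noteq> \<infinity>" using elim by auto
    then have "summable (\<lambda>i. (cmod (f (e i + x)))\<^sup>2)" by (intro summable_suminf_not_top) auto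
    then have "((\<lambda>y. (cmod (f (y + x)))\<^sup>2) \<circ> e) summable_on UNIV"
      by (simp add: o_def summable_on_UNIV_nonneg_real_iff)
    then show ?case using summable_on_reindex[OF e_inj] e_range by metis
  qed
qed simp

lemma group_ring_of_combination:
  fixes k :: "nat \<Rightarrow> 'g" and c :: "nat \<Rightarrow> complex"
  assumes kK: "\<forall>j<n. k j \<in> K" and k_inj: "inj_on k {..<n}"
  obtains a where "a \<in> group_ring K" and "\<And>j. j < n \<Longrightarrow> a (k j) = c j"
    and "\<And>h. (\<Sum>g | a g \<noteq> 0. a g * h g) = (\<Sum>j<n. c j * h (k j))"
proof
  define a where "a g = (\<Sum>j | j < n \<and> k j = g. c j)" for g
  show a_k: "a (k j) = c j" if "j < n" for j
  proof -
    have "{j'. j' < n \<and> k j' = k j} = {j}" using k_inj that by (auto dest: inj_onD)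
    then show ?thesis unfolding a_def by simp
  qed
  have support: "{g. a g \<noteq> 0} \<subseteq> k ` {..<n}"
  proof
    fix g assume "g \<in> {g. a g \<noteq> 0}"
    then have "{j. j < n \<and> k j = g} \<noteq> {}" unfolding a_def by force
    then show "g \<in> k ` {..<n}" by blast
  qed
  show "a \<in> group_ring K"
    unfolding group_ring_def using support kK finite_subset[OF support] by auto
  show "(\<Sum>g | a g \<noteq> 0. a g * h g) = (\<Sum>j<n. c j * h (k j))" for h
  proof -
    have "(\<Sum>g | a g \<noteq> 0. a g * h g) = (\<Sum>g\<in>k ` {..<n}. a g * h g)"
      by (rule sum.mono_neutral_left) (use support in auto)
    also have "\<dots> = (\<Sum>j<n. a (k j) * h (k j))" by (simp add: sum.reindex[OF k_inj])
    finally show ?thesis by (simp add: a_k)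
  qed
qed

lemma fiber_mem_mat_kernel:
  assumes K: "is_subgroup K" and kK: "\<forall>j<n. k j \<in> K"
    and a: "\<And>h. (\<Sum>g | a g \<noteq> 0. a g * h g) = (\<Sum>j<n. c j * h (k j))"
    and square_summable_fiber: "(\<lambda>y. (cmod (f (y + x)))\<^sup>2) summable_on K"
    and vanish: "\<forall>y\<in>K. (\<Sum>j<n. c j * f (- k j + (y + x))) = 0"
  shows "(\<lambda>(y, i). if i = 0 \<and> y \<in> K then f (y + x) else 0) \<in> mat_kernel K (\<lambda>_ _. a) 1 1"
proof -
  define \<xi> where "\<xi> = (\<lambda>(y, i). if i = (0::nat) \<and> y \<in> K then f (y + x) else 0)"
  have "(\<lambda>p. (cmod (\<xi> p))\<^sup>2) summable_on (\<lambda>y. (y, 0::nat)) ` K"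
    using square_summable_fiber summable_on_reindex[of "\<lambda>y. (y, 0::nat)" K "\<lambda>p. (cmod (\<xi> p))\<^sup>2"]
    by (simp add: inj_on_def o_def \<xi>_def cong: summable_on_cong)
  moreover have "(\<lambda>p. (cmod (\<xi> p))\<^sup>2) summable_on (\<lambda>y. (y, 0::nat)) ` K \<longleftrightarrow>
                 (\<lambda>p. (cmod (\<xi> p))\<^sup>2) summable_on UNIV"
    by (rule summable_on_cong_neutral) (auto simp: \<xi>_def image_iff)
  ultimately have "square_summable \<xi>" unfolding square_summable_def by blast
  moreover have "(\<Sum>g | a g \<noteq> 0. a g * \<xi> (- g + y, 0)) = 0" if "y \<in> K" for y
  proof -
    have "- k j + y \<in> K" if "j < n" for j
      using K kK \<open>y \<in> K\<close> that unfolding is_subgroup_def by blast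
    then have "(\<Sum>j<n. c j * \<xi> (- k j + y, 0)) = (\<Sum>j<n. c j * f (- k j + (y + x)))"
      by (intro sum.cong) (auto simp: \<xi>_def add.assoc)
    then show ?thesis using a vanish that by simp
  qed
  ultimately show ?thesis
    unfolding mem_mat_kernel_1x1 \<xi>_def[symmetric] by (auto simp: \<xi>_def)
qed

theorem theorem1p2:
  fixes \<mu> :: "'g::{topological_group_add,t2_space} measure"
    and K :: "'g set"
    and f :: "'g \<Rightarrow> complex"
  assumes "locally_compact_space (euclidean :: 'g topology)"
    and "sigma_compact_type TYPE('g)"
    and "left_haar_measure \<mu>"
    and "is_subgroup K" and "discrete_subset K" and "torsion_free K"
    and "strong_atiyah K"
    and "f \<in> borel_measurable \<mu>" and "integrable \<mu> (\<lambda>x. (cmod (f x))\<^sup>2)"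
    and "\<not> (AE x in \<mu>. f x = 0)"
  shows "\<forall>(n::nat) (k :: nat \<Rightarrow> 'g) (c :: nat \<Rightarrow> complex).
           (\<forall>j<n. k j \<in> K) \<and> inj_on k {..<n} \<and> (\<exists>j<n. c j \<noteq> 0) \<longrightarrow>
           \<not> (AE x in \<mu>. (\<Sum>j<n. c j * f (- k j + x)) = 0)"
proof (intro allI impI notI, elim conjE)
  fix n :: nat and k :: "nat \<Rightarrow> 'g" and c :: "nat \<Rightarrow> complex"
  assume kK: "\<forall>j<n. k j \<in> K" and k_inj: "inj_on k {..<n}" and c_nonzero: "\<exists>j<n. c j \<noteq> 0"
    and vanish: "AE x in \<mu>. (\<Sum>j<n. c j * f (- k j + x)) = 0"
  obtain a where a: "a \<in> group_ring K" "\<And>j. j < n \<Longrightarrow> a (k j) = c j"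
    and a_sum: "\<And>h. (\<Sum>g | a g \<noteq> 0. a g * h g) = (\<Sum>j<n. c j * h (k j))"
    using group_ring_of_combination[OF kK k_inj, of c] by blast
  obtain j where "j < n" "c j \<noteq> 0" using c_nonzero by blast
  then have "a \<noteq> (\<lambda>_. 0)" using a(2) by (metis (mono_tags))
  then have trivial: "mat_kernel K (\<lambda>_ _. a) 1 1 = {\<lambda>_. 0}"
    by (rule mat_kernel_trivial_if_strong_atiyah[OF assms(4,7) a(1)])
  have "AE x in \<mu>. \<forall>y\<in>K. (\<Sum>j<n. c j * f (- k j + (y + x))) = 0"
    using left_haar_AE_translates[OF assms(3) countable_discrete_subgroup[OF assms(2,4,5)] vanish] .
  moreover have "AE x in \<mu>. (\<lambda>y. (cmod (f (y + x)))\<^sup>2) summable_on K"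
    by (rule AE_square_summable_on_translates[OF assms(2-5,8,9)])
  ultimately have "AE x in \<mu>. f x = 0"
  proof eventually_elim
    case (elim x)
    have "0 \<in> K" using assms(4) unfolding is_subgroup_def by simp
    have "(\<lambda>(y, i). if i = (0::nat) \<and> y \<in> K then f (y + x) else 0) = (\<lambda>_. 0)"
      using fiber_mem_mat_kernel[OF assms(4) kK a_sum elim(2,1)] trivial by blast
    from fun_cong[OF this, of "(0, 0)"] show "f x = 0" using \<open>0 \<in> K\<close> by simp
  qed
  then show False using assms(10) by blast
qed

end
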